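(* For any connected graphs $G$ and $H$, $$dim_s(G\square H)\le \min\{dim_s(G)\,|\partial(H)|,\ |\partial(G)|\,dim_s(H)\}.$$
   Context: Graphs are finite, simple, undirected; for connected $G$, $d_G$ is the shortest-path distance and $I_G[u,v]$ is the set of vertices lying on some shortest $u$–$v$ path. A vertex $w$ strongly resolves vertices $u,v$ if $v\in I_G[u,w]$ or $u\in I_G[v,w]$. A strong resolving set of $G$ is a set $S\subseteq V(G)$ such that every pair of vertices is strongly resolved by some vertex of $S$; $dim_s(G)$ is the minimum cardinality of such a set. A vertex $u$ is maximally distant from $v$ if $d_G(v,w)\le d_G(u,v)$ for every neighbor $w$ of $u$; distinct $u,v$ are mutually maximally distant if each is maximally distant from the other. The boundary $\partial(G)$ is the set of vertices mutually maximally distant with some vertex. $G\square H$ denotes the Cartesian product: vertex set $V(G)\times V(H)$, $(a,b)\sim(c,d)$ iff ($a=c$ and $bd\in E(H)$) or ($b=d$ and $ac\in E(G)$). *)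

theory Defs
  imports Main
begin

record 'a graph =
  verts :: "'a set"
  adj   :: "'a \<Rightarrow> 'a \<Rightarrow> bool"

definition simple_graph :: "'a graph \<Rightarrow> bool" where
  "simple_graph G \<longleftrightarrow> finite (verts G)
     \<and> (\<forall>u v. adj G u v \<longrightarrow> u \<in> verts G \<and> v \<in> verts G)
     \<and> (\<forall>u v. adj G u v \<longrightarrow> adj G v u)
     \<and> (\<forall>u. \<not> adj G u u)"

definition walk_of_len :: "'a graph \<Rightarrow> nat \<Rightarrow> 'a \<Rightarrow> 'a \<Rightarrow> bool" where
  "walk_of_len G k u v \<longleftrightarrow> (\<exists>p. length p = Suc k \<and> hd p = u \<and> last p = v
      \<and> set p \<subseteq> verts G \<and> (\<forall>i<k. adj G (p ! i) (p ! Suc i)))"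

definition connected_graph :: "'a graph \<Rightarrow> bool" where
  "connected_graph G \<longleftrightarrow> simple_graph G \<and> verts G \<noteq> {}
     \<and> (\<forall>u\<in>verts G. \<forall>v\<in>verts G. \<exists>k. walk_of_len G k u v)"

definition gdist :: "'a graph \<Rightarrow> 'a \<Rightarrow> 'a \<Rightarrow> nat" where
  "gdist G u v = (LEAST k. walk_of_len G k u v)"

definition interval :: "'a graph \<Rightarrow> 'a \<Rightarrow> 'a \<Rightarrow> 'a set" where
  "interval G u v = {w \<in> verts G. gdist G u w + gdist G w v = gdist G u v}"

definition strongly_resolves :: "'a graph \<Rightarrow> 'a \<Rightarrow> 'a \<Rightarrow> 'a \<Rightarrow> bool" where
  "strongly_resolves G w u v \<longleftrightarrow> v \<in> interval G u w \<or> u \<in> interval G v w"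

definition strong_resolving_set :: "'a graph \<Rightarrow> 'a set \<Rightarrow> bool" where
  "strong_resolving_set G S \<longleftrightarrow> S \<subseteq> verts G
     \<and> (\<forall>u\<in>verts G. \<forall>v\<in>verts G. u \<noteq> v \<longrightarrow> (\<exists>w\<in>S. strongly_resolves G w u v))"

definition strong_metric_dim :: "'a graph \<Rightarrow> nat" where
  "strong_metric_dim G = (LEAST n. \<exists>S. strong_resolving_set G S \<and> card S = n)"

definition maximally_distant :: "'a graph \<Rightarrow> 'a \<Rightarrow> 'a \<Rightarrow> bool" where
  "maximally_distant G u v \<longleftrightarrow> u \<in> verts G \<and> v \<in> verts G
     \<and> (\<forall>w. adj G u w \<longrightarrow> gdist G v w \<le> gdist G u v)"

definition mutually_maximally_distant :: "'a graph \<Rightarrow> 'a \<Rightarrow> 'a \<Rightarrow> bool" where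
  "mutually_maximally_distant G u v \<longleftrightarrow> u \<noteq> v
     \<and> maximally_distant G u v \<and> maximally_distant G v u"

definition boundary :: "'a graph \<Rightarrow> 'a set" where
  "boundary G = {u \<in> verts G. \<exists>v \<in> verts G. mutually_maximally_distant G u v}"

definition cart_prod :: "'a graph \<Rightarrow> 'b graph \<Rightarrow> ('a \<times> 'b) graph" where
  "cart_prod G H = \<lparr> verts = verts G \<times> verts H,
     adj = (\<lambda>(a, b) (c, d). (a = c \<and> adj H b d) \<or> (b = d \<and> adj G a c)) \<rparr>"

end

theory Submission
  imports Defs
begin

text \<open>Distances in G \<box> H add up coordinatewise, so intervals of G \<box> H are products of
  intervals. Hence if s strongly resolves a, c in G and t is a boundary vertex of H such that
  d lies on a shortest b-t path (or b on a shortest d-t path, matching the direction in which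
  s resolves a, c), then (s, t) strongly resolves (a, b), (c, d). Such a t always exists, because
  every shortest path extends to one ending in a boundary vertex. Thus S \<times> \<partial>(H) is a strong
  resolving set for every strong resolving set S of G, and the other bound follows by symmetry.\<close>

lemma walk_of_len_0_iff: "walk_of_len G 0 u v \<longleftrightarrow> u = v \<and> u \<in> verts G"
proof
  assume "walk_of_len G 0 u v"
  then obtain p where p: "length p = Suc 0" "hd p = u" "last p = v" "set p \<subseteq> verts G"
    unfolding walk_of_len_def by auto
  then obtain x where "p = [x]" by (auto simp: length_Suc_conv)
  with p show "u = v \<and> u \<in> verts G" by auto
next
  assume "u = v \<and> u \<in> verts G"
  then show "walk_of_len G 0 u v" unfolding walk_of_len_def by (intro exI[of _ "[u]"]) auto
qed

lemma walk_of_len_Suc_iff: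
  "walk_of_len G (Suc k) u v \<longleftrightarrow> u \<in> verts G \<and> (\<exists>w. adj G u w \<and> walk_of_len G k w v)"
proof
  assume "walk_of_len G (Suc k) u v"
  then obtain p where p: "length p = Suc (Suc k)" "hd p = u" "last p = v" "set p \<subseteq> verts G"
      "\<forall>i<Suc k. adj G (p ! i) (p ! Suc i)"
    unfolding walk_of_len_def by blast
  then obtain y q where p_eq: "p = u # y # q" by (auto simp: length_Suc_conv)
  have "walk_of_len G k y v" unfolding walk_of_len_def
  proof (intro exI[of _ "y # q"] conjI allI impI)
    fix i assume "i < k"
    then show "adj G ((y # q) ! i) ((y # q) ! Suc i)" using p(5)[rule_format, of "Suc i"] p_eq by auto
  qed (use p p_eq in auto)
  moreover have "adj G u y" using p(5)[rule_format, of 0] p_eq by auto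
  ultimately show "u \<in> verts G \<and> (\<exists>w. adj G u w \<and> walk_of_len G k w v)" using p p_eq by auto
next
  assume "u \<in> verts G \<and> (\<exists>w. adj G u w \<and> walk_of_len G k w v)"
  then obtain w p where u: "u \<in> verts G" "adj G u w"
    and p: "length p = Suc k" "hd p = w" "last p = v" "set p \<subseteq> verts G"
      "\<forall>i<k. adj G (p ! i) (p ! Suc i)"
    unfolding walk_of_len_def by blast
  have "p ! 0 = w" using p by (cases p) auto
  show "walk_of_len G (Suc k) u v" unfolding walk_of_len_def
  proof (intro exI[of _ "u # p"] conjI allI impI)
    fix i assume "i < Suc k"
    then show "adj G ((u # p) ! i) ((u # p) ! Suc i)" using p u \<open>p ! 0 = w\<close> by (cases i) auto
  qed (use p u in \<open>auto simp: last_ConsR\<close>)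
qed

lemma walk_of_len_verts: "walk_of_len G k u v \<Longrightarrow> u \<in> verts G \<and> v \<in> verts G"
  by (induction k arbitrary: u) (auto simp: walk_of_len_0_iff walk_of_len_Suc_iff)

lemma walk_of_len_append:
  "walk_of_len G k u v \<Longrightarrow> walk_of_len G l v w \<Longrightarrow> walk_of_len G (k + l) u w"
  by (induction k arbitrary: u) (auto simp: walk_of_len_0_iff walk_of_len_Suc_iff)

lemma walk_of_len_rev:
  assumes "simple_graph G"
  shows "walk_of_len G k u v \<Longrightarrow> walk_of_len G k v u"
proof (induction k arbitrary: u)
  case 0
  then show ?case by (auto simp: walk_of_len_0_iff)
next
  case (Suc k)
  then obtain w where w: "u \<in> verts G" "adj G u w" "walk_of_len G k w v"
    by (auto simp: walk_of_len_Suc_iff)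
  have "walk_of_len G 1 w u"
    using w assms walk_of_len_verts[OF w(3)]
    by (auto simp: walk_of_len_Suc_iff walk_of_len_0_iff simple_graph_def)
  with Suc.IH[OF w(3)] show ?case using walk_of_len_append[of G k v w 1 u] by simp
qed

lemma gdist_le_walk: "walk_of_len G k u v \<Longrightarrow> gdist G u v \<le> k"
  unfolding gdist_def by (rule Least_le)

lemma gdist_self: "u \<in> verts G \<Longrightarrow> gdist G u u = 0"
  using gdist_le_walk[of G 0 u u] by (simp add: walk_of_len_0_iff)

lemma left_mem_interval: "a \<in> verts G \<Longrightarrow> a \<in> interval G a s"
  by (simp add: interval_def gdist_self)

lemma right_mem_interval: "a \<in> verts G \<Longrightarrow> s \<in> verts G \<Longrightarrow> s \<in> interval G a s"
  by (simp add: interval_def gdist_self)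

context
  fixes G :: "'a graph"
  assumes conn: "connected_graph G"
begin

lemma gdist_walk:
  assumes "u \<in> verts G" "v \<in> verts G"
  shows "walk_of_len G (gdist G u v) u v"
proof -
  have "\<exists>k. walk_of_len G k u v" using conn assms by (simp add: connected_graph_def)
  then show ?thesis unfolding gdist_def by (rule LeastI_ex)
qed

lemma gdist_eq_0_iff: "u \<in> verts G \<Longrightarrow> v \<in> verts G \<Longrightarrow> gdist G u v = 0 \<longleftrightarrow> u = v"
  using gdist_walk[of u v] gdist_self[of u G] by (auto simp: walk_of_len_0_iff)

lemma gdist_commute: "u \<in> verts G \<Longrightarrow> v \<in> verts G \<Longrightarrow> gdist G u v = gdist G v u"
  using conn gdist_walk[of u v] gdist_walk[of v u]
  by (metis antisym connected_graph_def gdist_le_walk walk_of_len_rev)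

lemma gdist_triangle:
  "u \<in> verts G \<Longrightarrow> v \<in> verts G \<Longrightarrow> w \<in> verts G \<Longrightarrow> gdist G u w \<le> gdist G u v + gdist G v w"
  using gdist_le_walk[OF walk_of_len_append[OF gdist_walk[of u v] gdist_walk[of v w]]] .

lemma adj_verts: "adj G u w \<Longrightarrow> u \<in> verts G \<and> w \<in> verts G"
  using conn by (auto simp: connected_graph_def simple_graph_def)

lemma gdist_adj_le_1: "adj G u w \<Longrightarrow> gdist G u w \<le> 1"
  using adj_verts[of u w] gdist_le_walk[of G 1 u w]
  by (simp add: walk_of_len_Suc_iff walk_of_len_0_iff)

end

lemma walk_of_len_cart_prod_split:
  "walk_of_len (cart_prod G H) k (a, b) (c, d) \<Longrightarrow>
     \<exists>k1 k2. k1 + k2 = k \<and> walk_of_len G k1 a c \<and> walk_of_len H k2 b d"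
proof (induction k arbitrary: a b)
  case 0
  then show ?case by (auto simp: walk_of_len_0_iff cart_prod_def)
next
  case (Suc k)
  then obtain a' b' where step: "(a, b) \<in> verts (cart_prod G H)" "adj (cart_prod G H) (a, b) (a', b')"
      "walk_of_len (cart_prod G H) k (a', b') (c, d)"
    by (auto simp: walk_of_len_Suc_iff)
  from Suc.IH[OF step(3)] obtain k1 k2 where
    k: "k1 + k2 = k" "walk_of_len G k1 a' c" "walk_of_len H k2 b' d" by blast
  from step(1,2) have ab: "a \<in> verts G" "b \<in> verts H"
    and "(a = a' \<and> adj H b b') \<or> (b = b' \<and> adj G a a')"
    by (auto simp: cart_prod_def)
  then consider "a = a'" "adj H b b'" | "b = b'" "adj G a a'" by blast
  then show ?case
  proof cases
    case 1
    then have "walk_of_len H (Suc k2) b d" using k ab by (auto simp: walk_of_len_Suc_iff)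
    with 1 k show ?thesis by (intro exI[of _ k1] exI[of _ "Suc k2"]) auto
  next
    case 2
    then have "walk_of_len G (Suc k1) a c" using k ab by (auto simp: walk_of_len_Suc_iff)
    with 2 k show ?thesis by (intro exI[of _ "Suc k1"] exI[of _ k2]) auto
  qed
qed

lemma walk_of_len_cart_prod_fst:
  "walk_of_len G k a c \<Longrightarrow> b \<in> verts H \<Longrightarrow> walk_of_len (cart_prod G H) k (a, b) (c, b)"
  by (induction k arbitrary: a) (auto simp: walk_of_len_0_iff walk_of_len_Suc_iff cart_prod_def)

lemma walk_of_len_cart_prod_snd:
  "walk_of_len H k b d \<Longrightarrow> a \<in> verts G \<Longrightarrow> walk_of_len (cart_prod G H) k (a, b) (a, d)"
  by (induction k arbitrary: b) (auto simp: walk_of_len_0_iff walk_of_len_Suc_iff cart_prod_def)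

lemma verts_cart_prod: "verts (cart_prod G H) = verts G \<times> verts H"
  by (simp add: cart_prod_def)

lemma gdist_cart_prod:
  assumes G: "connected_graph G" and H: "connected_graph H"
    and "a \<in> verts G" "c \<in> verts G" "b \<in> verts H" "d \<in> verts H"
  shows "gdist (cart_prod G H) (a, b) (c, d) = gdist G a c + gdist H b d"
proof (rule antisym)
  have walk: "walk_of_len (cart_prod G H) (gdist G a c + gdist H b d) (a, b) (c, d)"
    using walk_of_len_append[OF walk_of_len_cart_prod_fst[OF gdist_walk[OF G assms(3,4)] assms(5)]
                               walk_of_len_cart_prod_snd[OF gdist_walk[OF H assms(5,6)] assms(4)]] .
  then show "gdist (cart_prod G H) (a, b) (c, d) \<le> gdist G a c + gdist H b d"
    by (rule gdist_le_walk)
  from walk have "walk_of_len (cart_prod G H) (gdist (cart_prod G H) (a, b) (c, d)) (a, b) (c, d)"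
    unfolding gdist_def by (rule LeastI)
  from walk_of_len_cart_prod_split[OF this] obtain k1 k2 where
    "k1 + k2 = gdist (cart_prod G H) (a, b) (c, d)" "walk_of_len G k1 a c" "walk_of_len H k2 b d"
    by blast
  then show "gdist G a c + gdist H b d \<le> gdist (cart_prod G H) (a, b) (c, d)"
    using gdist_le_walk[of G k1 a c] gdist_le_walk[of H k2 b d] by linarith
qed

text \<open>Since distances add up coordinatewise, the triangle inequality in each factor forces
  equality in both.\<close>

lemma interval_cart_prod_iff:
  assumes G: "connected_graph G" and H: "connected_graph H"
    and "a \<in> verts G" "s \<in> verts G" "b \<in> verts H" "t \<in> verts H"
  shows "(c, d) \<in> interval (cart_prod G H) (a, b) (s, t) \<longleftrightarrow>
           c \<in> interval G a s \<and> d \<in> interval H b t"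
proof (cases "c \<in> verts G \<and> d \<in> verts H")
  case True
  then show ?thesis
    using assms gdist_triangle[OF G, of a c s] gdist_triangle[OF H, of b d t]
    by (auto simp: interval_def verts_cart_prod gdist_cart_prod)
qed (auto simp: interval_def verts_cart_prod)

lemma strongly_resolves_cart_prod_iff:
  assumes "connected_graph G" "connected_graph H"
    and "a \<in> verts G" "c \<in> verts G" "s \<in> verts G" "b \<in> verts H" "d \<in> verts H" "t \<in> verts H"
  shows "strongly_resolves (cart_prod G H) (s, t) (a, b) (c, d) \<longleftrightarrow>
           (c \<in> interval G a s \<and> d \<in> interval H b t) \<or> (a \<in> interval G c s \<and> b \<in> interval H d t)"
  using assms by (simp add: strongly_resolves_def interval_cart_prod_iff)

lemma strong_resolving_set_cart_prod_swap:
  assumes G: "connected_graph G" and H: "connected_graph H"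
    and resolving: "strong_resolving_set (cart_prod G H) (A \<times> B)"
  shows "strong_resolving_set (cart_prod H G) (B \<times> A)"
  unfolding strong_resolving_set_def verts_cart_prod
proof (intro conjI ballI impI)
  show "B \<times> A \<subseteq> verts H \<times> verts G"
    using resolving by (auto simp: strong_resolving_set_def verts_cart_prod)
next
  fix u v assume u: "u \<in> verts H \<times> verts G" and v: "v \<in> verts H \<times> verts G" and "u \<noteq> v"
  obtain b a d c where uv: "u = (b, a)" "v = (d, c)" by (cases u, cases v)
  with u v \<open>u \<noteq> v\<close> obtain s t where st: "s \<in> A" "t \<in> B"
    and "strongly_resolves (cart_prod G H) (s, t) (a, b) (c, d)"
    using resolving unfolding strong_resolving_set_def verts_cart_prod by fastforce
  moreover have "s \<in> verts G" "t \<in> verts H"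
    using resolving st by (auto simp: strong_resolving_set_def verts_cart_prod)
  ultimately show "\<exists>w\<in>B \<times> A. strongly_resolves (cart_prod H G) w u v"
    using u v uv strongly_resolves_cart_prod_iff[OF G H] strongly_resolves_cart_prod_iff[OF H G]
    by (intro bexI[of _ "(t, s)"]) auto
qed

lemma strong_resolving_set_verts: "strong_resolving_set G (verts G)"
  unfolding strong_resolving_set_def strongly_resolves_def
  using right_mem_interval by fast

lemma strong_metric_dim_attained: "\<exists>S. strong_resolving_set G S \<and> card S = strong_metric_dim G"
proof -
  have "\<exists>n S. strong_resolving_set G S \<and> card S = n"
    using strong_resolving_set_verts by blast
  then show ?thesis unfolding strong_metric_dim_def by (rule LeastI_ex)
qed

lemma strong_metric_dim_le: "strong_resolving_set G S \<Longrightarrow> strong_metric_dim G \<le> card S"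
  unfolding strong_metric_dim_def by (rule Least_le) blast

lemma two_le_card_obtains_other:
  assumes "2 \<le> card A" "x \<in> A"
  obtains y where "y \<in> A" "y \<noteq> x"
proof -
  have "\<not> A \<subseteq> {x}" using assms(1) card_mono[of "{x}" A] by auto
  then show ?thesis using that by blast
qed

text \<open>The pair a = c is included: it is resolved by any vertex of S, and S is nonempty
  as soon as G has two vertices.\<close>

lemma strong_resolving_set_resolves:
  assumes S: "strong_resolving_set G S" and "2 \<le> card (verts G)"
    and a: "a \<in> verts G" and c: "c \<in> verts G"
  shows "\<exists>s\<in>S. strongly_resolves G s a c"
proof (cases "a = c")
  case True
  obtain a' where "a' \<in> verts G" "a' \<noteq> a" using two_le_card_obtains_other assms(2) a .
  then obtain s where "s \<in> S" using S a unfolding strong_resolving_set_def by blast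
  then show ?thesis using True a by (auto simp: strongly_resolves_def left_mem_interval)
next
  case False
  then show ?thesis using S a c unfolding strong_resolving_set_def by blast
qed

lemma ex_farthest_through:
  assumes "finite (verts G)" and "b \<in> verts G" "d \<in> verts G"
  obtains t where "t \<in> verts G" "d \<in> interval G b t"
    "\<And>x. x \<in> verts G \<Longrightarrow> d \<in> interval G b x \<Longrightarrow> gdist G b x \<le> gdist G b t"
proof -
  define A where "A = {x \<in> verts G. d \<in> interval G b x}"
  have "finite A" using assms(1) by (simp add: A_def)
  moreover have "d \<in> A" using assms(2,3) by (simp add: A_def right_mem_interval)
  ultimately have "Max (gdist G b ` A) \<in> gdist G b ` A" by (intro Max_in) auto
  then obtain t where t: "Max (gdist G b ` A) = gdist G b t" "t \<in> A" by (rule imageE)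
  have "gdist G b x \<le> gdist G b t" if "x \<in> A" for x
    using \<open>finite A\<close> that t(1)[symmetric] by simp
  with t(2) show ?thesis using that unfolding A_def by blast
qed

context
  fixes G :: "'a graph"
  assumes conn: "connected_graph G"
begin

text \<open>If a neighbour w of t were farther from b than t, then d would also lie on a
  shortest b-w path, contradicting the maximality of t.\<close>

lemma farthest_through_maximally_distant:
  assumes b: "b \<in> verts G" and t: "t \<in> verts G" and d: "d \<in> interval G b t"
    and farthest: "\<And>x. x \<in> verts G \<Longrightarrow> d \<in> interval G b x \<Longrightarrow> gdist G b x \<le> gdist G b t"
  shows "maximally_distant G t b"
  unfolding maximally_distant_def
proof (intro conjI allI impI b t)
  fix w assume "adj G t w"
  then have w: "w \<in> verts G" and tw: "gdist G t w \<le> 1"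
    using adj_verts[OF conn] gdist_adj_le_1[OF conn] by blast+
  from d have dV: "d \<in> verts G" and bdt: "gdist G b d + gdist G d t = gdist G b t"
    by (auto simp: interval_def)
  show "gdist G b w \<le> gdist G t b"
  proof (rule ccontr)
    assume "\<not> ?thesis"
    then have far: "gdist G b t < gdist G b w" using gdist_commute[OF conn b t] by simp
    have "d \<in> interval G b w"
      using w dV bdt tw far gdist_triangle[OF conn b t w] gdist_triangle[OF conn dV t w]
        gdist_triangle[OF conn b dV w]
      by (simp add: interval_def)
    then show False using farthest[OF w] far by simp
  qed
qed

lemma maximally_distant_through:
  assumes md: "maximally_distant G t b" and y: "y \<in> verts G" and b: "b \<in> interval G t y"
  shows "maximally_distant G t y"
  unfolding maximally_distant_def
proof (intro conjI allI impI y)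
  show t: "t \<in> verts G" using md by (simp add: maximally_distant_def)
  fix w assume "adj G t w"
  then have w: "w \<in> verts G" and bw: "gdist G b w \<le> gdist G t b"
    using adj_verts[OF conn] md by (auto simp: maximally_distant_def)
  have bV: "b \<in> verts G" and tby: "gdist G t b + gdist G b y = gdist G t y"
    using b by (auto simp: interval_def)
  show "gdist G y w \<le> gdist G t y"
    using gdist_triangle[OF conn y bV w] gdist_commute[OF conn y bV] bw tby by linarith
qed

text \<open>Extend a shortest b-d path beyond d as far as possible, to some t; then extend a
  shortest t-b path beyond b as far as possible, to some y. The pair t, y is mutually
  maximally distant.\<close>

lemma boundary_covers_intervals:
  assumes two: "2 \<le> card (verts G)" and b: "b \<in> verts G" and d: "d \<in> verts G"
  shows "\<exists>t\<in>boundary G. d \<in> interval G b t"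
proof -
  have fin: "finite (verts G)" using conn by (simp add: connected_graph_def simple_graph_def)
  obtain t where t: "t \<in> verts G" "d \<in> interval G b t"
    and t_far: "\<And>x. x \<in> verts G \<Longrightarrow> d \<in> interval G b x \<Longrightarrow> gdist G b x \<le> gdist G b t"
    using ex_farthest_through[OF fin b d] by blast
  obtain y where y: "y \<in> verts G" "b \<in> interval G t y"
    and y_far: "\<And>x. x \<in> verts G \<Longrightarrow> b \<in> interval G t x \<Longrightarrow> gdist G t x \<le> gdist G t y"
    using ex_farthest_through[OF fin t(1) b] by blast
  have tb: "maximally_distant G t b"
    using farthest_through_maximally_distant[OF b t t_far] .
  obtain x where x: "x \<in> verts G" "x \<noteq> t" "b \<in> interval G t x"
  proof (cases "b = t")
    case True
    obtain x where "x \<in> verts G" "x \<noteq> t" using two_le_card_obtains_other two t(1) .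
    with True show ?thesis using that left_mem_interval[OF t(1)] by simp
  next
    case False
    then show ?thesis using that[OF b _ right_mem_interval[OF t(1) b]] by blast
  qed
  have "0 < gdist G t x" using gdist_eq_0_iff[OF conn t(1) x(1)] x(2) by simp
  then have "t \<noteq> y" using y_far[OF x(1,3)] gdist_self[OF t(1)] by auto
  moreover have "maximally_distant G y t"
    using farthest_through_maximally_distant[OF t(1) y y_far] .
  moreover have "maximally_distant G t y"
    using maximally_distant_through[OF tb y] .
  ultimately have "mutually_maximally_distant G t y"
    by (simp add: mutually_maximally_distant_def)
  then have "t \<in> boundary G"
    using t(1) y(1) unfolding boundary_def by blast
  with t(2) show ?thesis by blast
qed

end

lemma strong_resolving_set_cart_prod_boundary:
  assumes G: "connected_graph G" and H: "connected_graph H"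
    and "2 \<le> card (verts G)" "2 \<le> card (verts H)"
    and S: "strong_resolving_set G S"
  shows "strong_resolving_set (cart_prod G H) (S \<times> boundary H)"
  unfolding strong_resolving_set_def verts_cart_prod
proof (intro conjI ballI impI)
  show "S \<times> boundary H \<subseteq> verts G \<times> verts H"
    using S by (auto simp: strong_resolving_set_def boundary_def)
next
  fix u v assume u: "u \<in> verts G \<times> verts H" and v: "v \<in> verts G \<times> verts H"
  obtain a b c d where uv: "u = (a, b)" "v = (c, d)" by (cases u, cases v)
  with u v have a: "a \<in> verts G" and b: "b \<in> verts H" and c: "c \<in> verts G" and d: "d \<in> verts H"
    by auto
  obtain s where s: "s \<in> S" "strongly_resolves G s a c"
    using strong_resolving_set_resolves[OF S assms(3) a c] by blast
  have sV: "s \<in> verts G" using S s(1) by (auto simp: strong_resolving_set_def)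
  have "\<exists>t\<in>boundary H.
          (c \<in> interval G a s \<and> d \<in> interval H b t) \<or> (a \<in> interval G c s \<and> b \<in> interval H d t)"
    using s(2) unfolding strongly_resolves_def
  proof
    assume "c \<in> interval G a s"
    then show ?thesis using boundary_covers_intervals[OF H assms(4) b d] by blast
  next
    assume "a \<in> interval G c s"
    then show ?thesis using boundary_covers_intervals[OF H assms(4) d b] by blast
  qed
  then obtain t where t: "t \<in> boundary H"
    and "(c \<in> interval G a s \<and> d \<in> interval H b t) \<or> (a \<in> interval G c s \<and> b \<in> interval H d t)"
    by blast
  moreover have "t \<in> verts H" using t by (simp add: boundary_def)
  ultimately have "strongly_resolves (cart_prod G H) (s, t) u v"
    using strongly_resolves_cart_prod_iff[OF G H a c sV b d] uv by simp
  then show "\<exists>w\<in>S \<times> boundary H. strongly_resolves (cart_prod G H) w u v"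
    using s(1) t by blast
qed

theorem theorem24:
  fixes G :: "'a graph" and H :: "'b graph"
  assumes "connected_graph G" and "connected_graph H"
    and "card (verts G) \<ge> 2" and "card (verts H) \<ge> 2"
  shows "strong_metric_dim (cart_prod G H)
           \<le> min (strong_metric_dim G * card (boundary H))
                 (card (boundary G) * strong_metric_dim H)"
proof -
  obtain S where S: "strong_resolving_set G S" "card S = strong_metric_dim G"
    using strong_metric_dim_attained by blast
  obtain T where T: "strong_resolving_set H T" "card T = strong_metric_dim H"
    using strong_metric_dim_attained by blast
  have "strong_resolving_set (cart_prod G H) (S \<times> boundary H)"
    using strong_resolving_set_cart_prod_boundary[OF assms S(1)] .
  then have "strong_metric_dim (cart_prod G H) \<le> card (S \<times> boundary H)"
    by (rule strong_metric_dim_le)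
  moreover have "strong_resolving_set (cart_prod G H) (boundary G \<times> T)"
    using strong_resolving_set_cart_prod_swap[OF assms(2,1)
            strong_resolving_set_cart_prod_boundary[OF assms(2,1,4,3) T(1)]] .
  then have "strong_metric_dim (cart_prod G H) \<le> card (boundary G \<times> T)"
    by (rule strong_metric_dim_le)
  ultimately show ?thesis using S(2) T(2) by (simp add: card_cartesian_product)
qed

end
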